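(* Let $N\ge 1$, let $a_1,\dots,a_N>0$, $T_1,\dots,T_N\ge 0$ and $P_{\mathrm{tot}}>0$. For $P_i\ge 0$ let $r_i(P_i)=\log_2(1+a_iP_i)$ and $J(\mathbf P)=\sum_{i=1}^N (r_i(P_i)-T_i)^2$ for $\mathbf P=(P_1,\dots,P_N)$. Consider the problem of minimizing $J(\mathbf P)$ subject to $\sum_{i=1}^N P_i\le P_{\mathrm{tot}}$ and $P_i\ge 0$ for all $i$. If $\mathbf P^*=(P_1^*,\dots,P_N^* )$ is an optimal solution of this problem, then $r_i(P_i^* )\le T_i$ for all $i=1,\dots,N$. *)

theory Defs
  imports Complex_Main
begin

definition rate :: "(nat \<Rightarrow> real) \<Rightarrow> nat \<Rightarrow> real \<Rightarrow> real" where
  "rate a i p = log 2 (1 + a i * p)"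

definition J :: "nat \<Rightarrow> (nat \<Rightarrow> real) \<Rightarrow> (nat \<Rightarrow> real) \<Rightarrow> (nat \<Rightarrow> real) \<Rightarrow> real" where
  "J N a T P = (\<Sum>i=1..N. (rate a i (P i) - T i)^2)"

definition feasible :: "nat \<Rightarrow> real \<Rightarrow> (nat \<Rightarrow> real) \<Rightarrow> bool" where
  "feasible N Ptot P \<longleftrightarrow> (\<forall>i\<in>{1..N}. P i \<ge> 0) \<and> (\<Sum>i=1..N. P i) \<le> Ptot"

definition optimal :: "nat \<Rightarrow> (nat \<Rightarrow> real) \<Rightarrow> (nat \<Rightarrow> real) \<Rightarrow> real \<Rightarrow> (nat \<Rightarrow> real) \<Rightarrow> bool" where
  "optimal N a T Ptot P \<longleftrightarrow> feasible N Ptot P \<and>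
     (\<forall>Q. feasible N Ptot Q \<longrightarrow> J N a T P \<le> J N a T Q)"

end

theory Submission
  imports Defs
begin

text \<open>If some user exceeded its target, \<open>r\<^sub>k(P\<^sub>k) > T\<^sub>k\<close>, then lowering \<open>P\<^sub>k\<close> to the power
  \<open>(2 powr T\<^sub>k - 1) / a\<^sub>k\<close> that meets the target exactly keeps the allocation feasible (it only
  frees power) and removes the positive term \<open>(r\<^sub>k(P\<^sub>k) - T\<^sub>k)\<^sup>2\<close> from \<open>J\<close>, contradicting
  optimality.\<close>

lemma sum_fun_upd_point:
  fixes g :: "'a \<Rightarrow> 'b \<Rightarrow> 'c::ab_group_add"
  assumes "finite A" and "k \<in> A"
  shows "(\<Sum>i\<in>A. g i ((P(k := q)) i)) = (\<Sum>i\<in>A. g i (P i)) - g k (P k) + g k q"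
proof -
  have rest: "(\<Sum>i\<in>A - {k}. g i ((P(k := q)) i)) = (\<Sum>i\<in>A - {k}. g i (P i))"
    by (rule sum.cong) auto
  show ?thesis
    using sum.remove[OF assms, of "\<lambda>i. g i ((P(k := q)) i)"]
      sum.remove[OF assms, of "\<lambda>i. g i (P i)"] rest
    by simp
qed

lemma J_fun_upd:
  assumes "k \<in> {1..N}"
  shows "J N a T (P(k := q)) = J N a T P - (rate a k (P k) - T k)^2 + (rate a k q - T k)^2"
  unfolding J_def
  using sum_fun_upd_point[OF finite_atLeastAtMost assms, of "\<lambda>i p. (rate a i p - T i)^2"]
  by simp

lemma feasible_fun_upd_decrease:
  assumes "feasible N Ptot P" and "0 \<le> q" and "q \<le> P k"
  shows "feasible N Ptot (P(k := q))"
proof (cases "k \<in> {1..N}")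
  case True
  then show ?thesis
    using assms sum_fun_upd_point[OF finite_atLeastAtMost True, of "\<lambda>_ p. p" P q]
    unfolding feasible_def by auto
next
  case False
  then have "(\<Sum>i=1..N. (P(k := q)) i) = (\<Sum>i=1..N. P i)"
    by (intro sum.cong) auto
  with False assms(1) show ?thesis
    unfolding feasible_def by auto
qed

lemma rate_strict_mono:
  assumes "a i > 0" and "0 \<le> p" and "0 \<le> q"
  shows "rate a i p < rate a i q \<longleftrightarrow> p < q"
proof -
  have "0 < 1 + a i * p" and "0 < 1 + a i * q"
    using assms by (simp_all add: add_pos_nonneg)
  then show ?thesis
    unfolding rate_def using assms(1) by simp
qed

definition target_power :: "(nat \<Rightarrow> real) \<Rightarrow> nat \<Rightarrow> real \<Rightarrow> real" where
  "target_power a i t = (2 powr t - 1) / a i"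

lemma target_power_nonneg:
  assumes "a i > 0" and "t \<ge> 0"
  shows "target_power a i t \<ge> 0"
  unfolding target_power_def using assms by (simp add: ge_one_powr_ge_zero)

lemma rate_target_power:
  assumes "a i > 0"
  shows "rate a i (target_power a i t) = t"
  unfolding rate_def target_power_def using assms by simp

theorem theorem1:
  fixes N :: nat and a T P :: "nat \<Rightarrow> real" and Ptot :: real
  assumes "N \<ge> 1"
    and "\<forall>i\<in>{1..N}. a i > 0"
    and "\<forall>i\<in>{1..N}. T i \<ge> 0"
    and "Ptot > 0"
    and "optimal N a T Ptot P"
  shows "\<forall>i\<in>{1..N}. rate a i (P i) \<le> T i"
proof (rule ccontr)
  assume "\<not> ?thesis"
  then obtain k where k: "k \<in> {1..N}" and exceeds: "rate a k (P k) > T k"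
    by force
  have feasP: "feasible N Ptot P" and minimal: "\<And>Q. feasible N Ptot Q \<Longrightarrow> J N a T P \<le> J N a T Q"
    using assms(5) unfolding optimal_def by auto
  have "a k > 0" and "T k \<ge> 0" and "P k \<ge> 0"
    using assms(2,3) feasP k unfolding feasible_def by auto
  define p where "p = target_power a k (T k)"
  have "0 \<le> p" and rate_p: "rate a k p = T k"
    unfolding p_def using \<open>a k > 0\<close> \<open>T k \<ge> 0\<close> by (simp_all add: target_power_nonneg rate_target_power)
  then have "p < P k"
    using exceeds rate_strict_mono[of a k p "P k"] \<open>a k > 0\<close> \<open>0 \<le> p\<close> \<open>P k \<ge> 0\<close> by simp
  then have "feasible N Ptot (P(k := p))"
    using feasible_fun_upd_decrease[OF feasP \<open>0 \<le> p\<close>] by simp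
  moreover have "J N a T (P(k := p)) < J N a T P"
    using J_fun_upd[OF k] rate_p exceeds by simp
  ultimately show False
    using minimal by fastforce
qed

end
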